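(* In the network model described in the context, let $\pi$ be an admissible cyclic policy with maximum inter-scheduling times $k^{\pi}_e$, and suppose the slice widths satisfy $w_{i,e}\ge\lambda_i k^{\pi}_e$ for all $e\in\mathcal{T}^{(i)}$. Then \[ |\mathcal{T}^{(i)}|\le\tau_i^*(\pi,\lambda_i)\le\sum_{e\in\mathcal{T}^{(i)}}k_e^{\pi}. \]
   Context: Network model: directed graph $G=(V,E)$, slotted time, link capacities $c_e$, interference given by a conflict graph on links with feasible activation sets $\mathcal{M}$. Flow $f_i$ has fixed route $\mathcal{T}^{(i)}$ (of $|\mathcal{T}^{(i)}|$ links) and deterministic fluid arrival rate $\lambda_i>0$ per slot at its source. Link $e\in\mathcal{T}^{(i)}$ reserves a slice $w_{i,e}$ for $f_i$ with its own FCFS queue (initially empty). An admissible policy activates $\mu^\pi(t)\in\mathcal{M}$ in each slot and is work-conserving (an activated link serves $\min\{Q_{i,e}(t),w_{i,e}\}$ from each slice queue; served units proceed to the next link of the route, one link per slot at most). A cyclic policy satisfies $\mu^\pi(t)=\mu^\pi(t+K^\pi)$ for all $t\ge 0$. The maximum inter-scheduling time $k_e^\pi$ of link $e$ is the largest number of slots between two consecutive activations of $e$ (cyclically over the period). $\tau_i^*(\pi,\lambda_i)$ is the maximum delay (from arrival at the source to delivery at the destination) experienced by any packet of $f_i$ under $\pi$, equivalently the minimum deadline that $\pi$ guarantees for $f_i$. *)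

theory Defs
  imports Complex_Main "HOL-Library.Extended_Nat"
begin

text \<open>The route is the list of links of the flow (hop 0 is the first link at the source).
  Per-slice queues of flow i are isolated from other flows, so only the
  flow under consideration needs to be modelled.\<close>

definition is_route :: "('v \<times> 'v) set \<Rightarrow> ('v \<times> 'v) list \<Rightarrow> bool" where
  "is_route E r \<longleftrightarrow> r \<noteq> [] \<and> distinct r \<and> set r \<subseteq> E \<and>
     (\<forall>j. Suc j < length r \<longrightarrow> snd (r ! j) = fst (r ! Suc j))"

definition admissible :: "('v \<times> 'v) set set \<Rightarrow> (nat \<Rightarrow> ('v \<times> 'v) set) \<Rightarrow> bool" where
  "admissible M mu \<longleftrightarrow> (\<forall>t. mu t \<in> M)"

definition cyclic :: "(nat \<Rightarrow> 'e set) \<Rightarrow> nat \<Rightarrow> bool" where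
  "cyclic mu K \<longleftrightarrow> K > 0 \<and> (\<forall>t. mu (t + K) = mu t)"

definition inter_sched :: "(nat \<Rightarrow> 'e set) \<Rightarrow> 'e \<Rightarrow> nat" where
  "inter_sched mu e = Max {d. \<exists>t. e \<in> mu t \<and> d = (LEAST s. 0 < s \<and> e \<in> mu (t + s))}"

text \<open>Work-conserving fluid dynamics. queues r w mu lam t j is the backlog of the
  slice queue of the flow at hop j (link r!j) at the beginning of slot t.
  Fluid arriving at the source during slot t (amount lam) can be served from
  slot t+1 on; fluid served by hop j in slot t enters hop j+1 and can be served
  there from slot t+1 on.\<close>
definition serv :: "('e list) \<Rightarrow> ('e \<Rightarrow> real) \<Rightarrow> (nat \<Rightarrow> 'e set) \<Rightarrow> nat \<Rightarrow> (nat \<Rightarrow> real) \<Rightarrow> nat \<Rightarrow> real" where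
  "serv r w mu t Q j = (if r ! j \<in> mu t then min (Q j) (w (r ! j)) else 0)"

primrec queues :: "'e list \<Rightarrow> ('e \<Rightarrow> real) \<Rightarrow> (nat \<Rightarrow> 'e set) \<Rightarrow> real \<Rightarrow> nat \<Rightarrow> nat \<Rightarrow> real" where
  "queues r w mu lam 0 = (\<lambda>j. 0)"
| "queues r w mu lam (Suc t) =
     (\<lambda>j. queues r w mu lam t j - serv r w mu t (queues r w mu lam t) j
          + (if j = 0 then lam else serv r w mu t (queues r w mu lam t) (j - 1)))"

definition delivered :: "'e list \<Rightarrow> ('e \<Rightarrow> real) \<Rightarrow> (nat \<Rightarrow> 'e set) \<Rightarrow> real \<Rightarrow> nat \<Rightarrow> real" where
  "delivered r w mu lam t =
     (\<Sum>u<t. serv r w mu u (queues r w mu lam u) (length r - 1))"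

text \<open>A fluid particle is identified by its position x > 0 in the arrival stream
  (FCFS everywhere).\<close>
definition arrival_slot :: "real \<Rightarrow> real \<Rightarrow> nat" where
  "arrival_slot lam x = nat (\<lceil>x / lam\<rceil> - 1)"

definition particle_delay :: "'e list \<Rightarrow> ('e \<Rightarrow> real) \<Rightarrow> (nat \<Rightarrow> 'e set) \<Rightarrow> real \<Rightarrow> real \<Rightarrow> enat" where
  "particle_delay r w mu lam x =
     (if \<exists>d. x \<le> delivered r w mu lam (Suc d)
      then enat ((LEAST d. x \<le> delivered r w mu lam (Suc d)) - arrival_slot lam x)
      else \<infinity>)"

definition max_delay :: "'e list \<Rightarrow> ('e \<Rightarrow> real) \<Rightarrow> (nat \<Rightarrow> 'e set) \<Rightarrow> real \<Rightarrow> enat" where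
  "max_delay r w mu lam = (SUP x\<in>{0<..}. particle_delay r w mu lam x)"

end

theory Submission
  imports Defs
begin

text \<open>Each slice queue is a rate-latency server: if its link is activated at least once in
  every window of k slots and the slice width is at least \<open>\<lambda> k\<close>, then a cumulative input of
  at least \<open>\<lambda> (t - S)\<close> yields a cumulative output of at least \<open>\<lambda> (t - S - k)\<close>. Chaining
  this along the route, the cumulative delivery lags the arrival curve \<open>\<lambda> t\<close> by at most the
  sum of the inter-scheduling times, which bounds every delay. Conversely fluid advances at
  most one hop per slot, so nothing is delivered before slot |r| and the very first particle
  is delayed by at least |r| slots.\<close>

locale fluid_server =
  fixes A D :: "nat \<Rightarrow> real" and act :: "nat \<Rightarrow> bool" and W :: real
  assumes D_0: "D 0 = 0"
    and D_Suc: "D (Suc t) = D t + (if act t then min (A t - D t) W else 0)"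
    and D_le_A: "D t \<le> A t"
    and W_nonneg: "0 \<le> W"
begin

lemma D_mono: "mono D"
  unfolding mono_iff_le_Suc using D_Suc D_le_A W_nonneg by simp

lemma D_nonneg: "0 \<le> D t"
  using monoD[OF D_mono, of 0 t] D_0 by simp

lemma D_Suc_le_A: "D (Suc t) \<le> A t"
  using D_Suc[of t] D_le_A[of t] by auto

lemma D_lower_bound:
  assumes lam: "0 \<le> lam" and S: "0 \<le> S" and W: "lam * real k \<le> W"
    and window: "\<And>t. \<exists>v. t \<le> v \<and> v < t + k \<and> act v"
    and A: "\<And>t. lam * (real t - S) \<le> A t"
  shows "lam * (real t - (S + real k)) \<le> D t"
proof -
  have catch_up: "lam * (real t - (S + real k)) \<le> D t"
    if active: "\<And>v. v < t \<Longrightarrow> act v \<Longrightarrow> lam * (real v - S) \<le> D (Suc v)" for t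
  proof (cases "k \<le> t")
    case True
    then obtain v where v: "t - k \<le> v" "v < t" "act v"
      using window[of "t - k"] by auto
    have "lam * (real t - (S + real k)) \<le> lam * (real v - S)"
      using v(1) True lam by (intro mult_left_mono) auto
    also have "\<dots> \<le> D (Suc v)" using active v(2,3) .
    also have "\<dots> \<le> D t" using monoD[OF D_mono] v(2) by simp
    finally show ?thesis .
  next
    case False
    then have "lam * (real t - (S + real k)) \<le> 0"
      using lam S by (intro mult_nonneg_nonpos) auto
    then show ?thesis using D_nonneg order_trans by blast
  qed
  have active: "lam * (real u - S) \<le> D (Suc u)" if "act u" for u
    using that
  proof (induction u rule: less_induct)
    case (less u)
    show ?case
    proof (cases "A u - D u \<le> W")
      case True
      then show ?thesis using D_Suc[of u] less.prems A[of u] by simp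
    next
      case False
      \<comment> \<open>a full slice was served, on top of the backlog bound inherited from the last activation\<close>
      then have "D (Suc u) = D u + W" using D_Suc[of u] less.prems by simp
      moreover have "lam * (real u - (S + real k)) \<le> D u"
        using catch_up less.IH by blast
      ultimately show ?thesis using W by (simp add: algebra_simps)
    qed
  qed
  show ?thesis using catch_up active by blast
qed

end

lemma cyclic_shift:
  assumes "cyclic mu K"
  shows "mu (s + m * K) = mu s"
proof (induction m)
  case (Suc m)
  have "mu (s + Suc m * K) = mu ((s + m * K) + K)" by (simp add: algebra_simps)
  also have "\<dots> = mu (s + m * K)" using assms by (simp add: cyclic_def)
  finally show ?case using Suc by simp
qed simp

lemma cyclic_next_activation:
  assumes cyc: "cyclic mu K" and act: "e \<in> mu u"
  shows "\<exists>s. 0 < s \<and> s \<le> inter_sched mu e \<and> e \<in> mu (u + s)"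
proof -
  let ?gap = "\<lambda>t. LEAST s. 0 < s \<and> e \<in> mu (t + s)"
  have K: "0 < K" "\<And>t. e \<in> mu t \<Longrightarrow> e \<in> mu (t + K)"
    using cyc by (auto simp: cyclic_def)
  have gap_le_K: "?gap t \<le> K" if "e \<in> mu t" for t
    by (rule Least_le) (use K that in auto)
  have "finite {d. \<exists>t. e \<in> mu t \<and> d = ?gap t}"
    by (rule finite_subset[of _ "{..K}"]) (auto dest: gap_le_K)
  then have "?gap u \<le> inter_sched mu e"
    unfolding inter_sched_def by (rule Max_ge) (use act in auto)
  moreover have "0 < ?gap u \<and> e \<in> mu (u + ?gap u)"
    by (rule LeastI[of _ K]) (use K act in auto)
  ultimately show ?thesis by blast
qed

lemma cyclic_activation_window:
  assumes cyc: "cyclic mu K" and act: "e \<in> mu u"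
  shows "\<exists>v. t \<le> v \<and> v < t + inter_sched mu e \<and> e \<in> mu v"
proof -
  let ?k = "inter_sched mu e"
  have late: "\<exists>v. t' \<le> v \<and> v < t' + ?k \<and> e \<in> mu v" if "u < t'" for t'
  proof -
    define before where "before = {s. s < t' \<and> e \<in> mu s}"
    have fin: "finite before" by (simp add: before_def)
    have "u \<in> before" using that act by (simp add: before_def)
    then have "Max before \<in> before" using fin Max_in by blast
    then have last: "Max before < t'" "e \<in> mu (Max before)" by (simp_all add: before_def)
    then obtain s where s: "0 < s" "s \<le> ?k" "e \<in> mu (Max before + s)"
      using cyclic_next_activation[OF cyc] by blast
    have "Max before + s \<notin> before"
      using Max_ge[OF fin, of "Max before + s"] s(1) by linarith
    then have "t' \<le> Max before + s" using s(3) by (simp add: before_def)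
    then show ?thesis using s(2,3) last(1) by (intro exI[of _ "Max before + s"]) simp
  qed
  \<comment> \<open>move the window past the known activation u, then shift back by whole periods\<close>
  define shift where "shift = Suc u * K"
  have "0 < K" using cyc by (simp add: cyclic_def)
  then have "Suc u * 1 \<le> shift" unfolding shift_def by (intro mult_le_mono2) simp
  then have "u < t + shift" by simp
  then obtain v where v: "t + shift \<le> v" "v < t + shift + ?k" "e \<in> mu v"
    using late by blast
  have "mu v = mu (v - shift)"
    using cyclic_shift[OF cyc, of "v - shift" "Suc u"] v(1) by (simp add: shift_def)
  moreover have "t \<le> v - shift" "v - shift < t + ?k" using v(1,2) by linarith+
  ultimately show ?thesis using v(3) by auto
qed

definition departures :: "'e list \<Rightarrow> ('e \<Rightarrow> real) \<Rightarrow> (nat \<Rightarrow> 'e set) \<Rightarrow> real \<Rightarrow> nat \<Rightarrow> nat \<Rightarrow> real" where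
  "departures r w mu lam j t = (\<Sum>u<t. serv r w mu u (queues r w mu lam u) j)"

definition arrivals :: "'e list \<Rightarrow> ('e \<Rightarrow> real) \<Rightarrow> (nat \<Rightarrow> 'e set) \<Rightarrow> real \<Rightarrow> nat \<Rightarrow> nat \<Rightarrow> real" where
  "arrivals r w mu lam j t = (if j = 0 then lam * real t else departures r w mu lam (j - 1) t)"

lemma queues_eq_arrivals_minus_departures:
  "queues r w mu lam t j = arrivals r w mu lam j t - departures r w mu lam j t"
  by (induction t arbitrary: j) (auto simp: arrivals_def departures_def algebra_simps)

lemma delivered_eq_departures:
  "delivered r w mu lam t = departures r w mu lam (length r - 1) t"
  by (simp add: delivered_def departures_def)

lemma queues_nonneg:
  assumes w: "\<forall>e\<in>set r. 0 \<le> w e" and lam: "0 \<le> lam"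
  shows "j < length r \<Longrightarrow> 0 \<le> queues r w mu lam t j"
proof (induction t arbitrary: j)
  case (Suc t)
  have "0 \<le> serv r w mu t (queues r w mu lam t) i" if "i < length r" for i
    using Suc.IH[OF that] w that by (simp add: serv_def)
  then show ?case
    using Suc.IH[of j] Suc.prems lam by (auto simp: serv_def)
qed simp

lemma fluid_server_hop:
  assumes w: "\<forall>e\<in>set r. 0 \<le> w e" and lam: "0 \<le> lam" and j: "j < length r"
  shows "fluid_server (arrivals r w mu lam j) (departures r w mu lam j) (\<lambda>t. r ! j \<in> mu t) (w (r ! j))"
proof
  fix t
  show "departures r w mu lam j (Suc t) = departures r w mu lam j t +
      (if r ! j \<in> mu t then min (arrivals r w mu lam j t - departures r w mu lam j t) (w (r ! j)) else 0)"
    by (simp add: departures_def serv_def queues_eq_arrivals_minus_departures)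
  show "departures r w mu lam j t \<le> arrivals r w mu lam j t"
    using queues_nonneg[OF w lam j, of mu t] by (simp add: queues_eq_arrivals_minus_departures)
qed (use w j in \<open>auto simp: departures_def\<close>)

lemma departures_eq_0_before_hop:
  assumes w: "\<forall>e\<in>set r. 0 \<le> w e" and lam: "0 \<le> lam"
  shows "j < length r \<Longrightarrow> t \<le> Suc j \<Longrightarrow> departures r w mu lam j t = 0"
proof (induction j arbitrary: t)
  have hop_idle: "departures r w mu lam j t = 0"
    if j: "j < length r" and t: "t \<le> Suc j" and idle: "\<And>t'. t' \<le> j \<Longrightarrow> arrivals r w mu lam j t' = 0"
    for j t
  proof (cases t)
    case (Suc t')
    note hop = fluid_server_hop[OF w lam j, of mu]
    show ?thesis
      using fluid_server.D_Suc_le_A[OF hop, of t'] fluid_server.D_nonneg[OF hop, of t] idle[of t'] t Suc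
      by simp
  qed (simp add: departures_def)
  {
    case 0
    then show ?case by (intro hop_idle) (auto simp: arrivals_def)
  next
    case (Suc j)
    then show ?case by (intro hop_idle) (auto simp: arrivals_def)
  }
qed

lemma departures_lower_bound:
  assumes cyc: "cyclic mu K" and scheduled: "\<forall>e\<in>set r. \<exists>t. e \<in> mu t" and lam: "0 \<le> lam"
    and wide: "\<forall>e\<in>set r. lam * real (inter_sched mu e) \<le> w e"
  shows "j < length r \<Longrightarrow>
    lam * (real t - real (\<Sum>i\<le>j. inter_sched mu (r ! i))) \<le> departures r w mu lam j t"
proof (induction j arbitrary: t)
  have w: "\<forall>e\<in>set r. 0 \<le> w e"
    using wide lam by (meson mult_nonneg_nonneg of_nat_0_le_iff order_trans)
  have hop_bound: "lam * (real t - (S + real (inter_sched mu (r ! j)))) \<le> departures r w mu lam j t"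
    if j: "j < length r" and S: "0 \<le> S" and A: "\<And>t. lam * (real t - S) \<le> arrivals r w mu lam j t"
    for j t S
  proof -
    obtain u where "r ! j \<in> mu u" using scheduled j by (meson nth_mem)
    show ?thesis
      by (rule fluid_server.D_lower_bound[OF fluid_server_hop[OF w lam j] lam S _
            cyclic_activation_window[OF cyc] A])
        (use wide j \<open>r ! j \<in> mu u\<close> in auto)
  qed
  {
    case 0
    show ?case using hop_bound[OF 0, of 0] by (simp add: arrivals_def)
  next
    case (Suc j)
    show ?case
      using hop_bound[OF Suc.prems, of "real (\<Sum>i\<le>j. inter_sched mu (r ! i))"] Suc.IH Suc.prems
      by (simp add: arrivals_def add.commute sum_nonneg)
  }
qed

lemma arrival_slot_bound:
  assumes "0 < lam" "0 < x"
  shows "x \<le> lam * (real (arrival_slot lam x) + 1)"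
proof -
  have "1 \<le> \<lceil>x / lam\<rceil>" using assms by (simp add: one_le_ceiling)
  then have "real (arrival_slot lam x) + 1 = of_int \<lceil>x / lam\<rceil>"
    by (simp add: arrival_slot_def)
  then have "x / lam \<le> real (arrival_slot lam x) + 1" by simp
  then show ?thesis using assms(1) by (simp add: divide_le_eq mult.commute)
qed

lemma particle_delay_le:
  assumes lam: "0 < lam" and x: "0 < x"
    and lag: "\<And>t. lam * (real t - real S) \<le> delivered r w mu lam t"
  shows "particle_delay r w mu lam x \<le> enat S"
proof -
  let ?a = "arrival_slot lam x"
  have "x \<le> lam * (real (Suc (?a + S)) - real S)"
    using arrival_slot_bound[OF lam x] by (simp add: add.commute)
  then have del: "x \<le> delivered r w mu lam (Suc (?a + S))"
    using lag[of "Suc (?a + S)"] by linarith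
  then have "(LEAST d. x \<le> delivered r w mu lam (Suc d)) \<le> ?a + S"
    by (rule Least_le)
  then have "(LEAST d. x \<le> delivered r w mu lam (Suc d)) - ?a \<le> S"
    by linarith
  then show ?thesis using del unfolding particle_delay_def by auto
qed

lemma particle_delay_ge:
  assumes "arrival_slot lam x = 0" and early: "\<And>d. d < n \<Longrightarrow> delivered r w mu lam (Suc d) < x"
  shows "enat n \<le> particle_delay r w mu lam x"
proof (cases "\<exists>d. x \<le> delivered r w mu lam (Suc d)")
  case True
  then have "x \<le> delivered r w mu lam (Suc (LEAST d. x \<le> delivered r w mu lam (Suc d)))"
    by (rule LeastI_ex)
  then have "n \<le> (LEAST d. x \<le> delivered r w mu lam (Suc d))"
    using early by (meson not_le)
  then show ?thesis using True assms(1) by (simp add: particle_delay_def)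
qed (simp add: particle_delay_def)

theorem theorem5:
  fixes E :: "('v \<times> 'v) set" and M :: "('v \<times> 'v) set set"
    and c :: "('v \<times> 'v) \<Rightarrow> real"
    and r :: "('v \<times> 'v) list" and w :: "('v \<times> 'v) \<Rightarrow> real"
    and mu :: "nat \<Rightarrow> ('v \<times> 'v) set" and K :: nat and lam :: real
  assumes "is_route E r"
    and "\<forall>A\<in>M. A \<subseteq> E"
    and "admissible M mu"
    and "cyclic mu K"
    and "\<forall>e\<in>set r. \<exists>t. e \<in> mu t"
    and "lam > 0"
    and "\<forall>e\<in>set r. w e \<le> c e"
    and "\<forall>e\<in>set r. w e \<ge> lam * real (inter_sched mu e)"
  shows "enat (length r) \<le> max_delay r w mu lam
       \<and> max_delay r w mu lam \<le> enat (\<Sum>e\<in>set r. inter_sched mu e)"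
proof
  let ?S = "\<Sum>e\<in>set r. inter_sched mu e"
  have r: "r \<noteq> []" "distinct r" using assms(1) by (auto simp: is_route_def)
  have w: "\<forall>e\<in>set r. 0 \<le> w e"
    using assms(6,8) by (meson less_imp_le mult_nonneg_nonneg of_nat_0_le_iff order_trans)
  have "?S = (\<Sum>i\<le>length r - 1. inter_sched mu (r ! i))"
    using r by (simp add: sum_list_distinct_conv_sum_set[symmetric] sum_list_sum_nth
        atLeast0LessThan lessThan_Suc_atMost[symmetric])
  then have "lam * (real t - real ?S) \<le> delivered r w mu lam t" for t
    using departures_lower_bound[OF assms(4,5) _ assms(8), of "length r - 1" t] assms(6) r
    by (simp add: delivered_eq_departures)
  then show "max_delay r w mu lam \<le> enat ?S"
    unfolding max_delay_def using assms(6) by (intro SUP_least particle_delay_le) auto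
  have "delivered r w mu lam (Suc d) = 0" if "d < length r" for d
    using departures_eq_0_before_hop[OF w, of lam "length r - 1" "Suc d" mu] that r assms(6)
    by (simp add: delivered_eq_departures)
  then have "enat (length r) \<le> particle_delay r w mu lam lam"
    using assms(6) by (intro particle_delay_ge) (auto simp: arrival_slot_def)
  also have "\<dots> \<le> max_delay r w mu lam"
    unfolding max_delay_def using assms(6) by (intro SUP_upper) auto
  finally show "enat (length r) \<le> max_delay r w mu lam" .
qed

end
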